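(* Let $H_1,\dots,H_s$ be graphs with cores $C_1,\dots,C_s$, and suppose there is a homomorphism from $H_j$ to $H_{j+1}$ for every $j=1,\dots,s$ (indices modulo $s$). Then $C_1,\dots,C_s$ are all isomorphic to a common graph $C$, and $H_1,\dots,H_s$ all have the same $C$-covering number.
   Context: A homomorphism $F\to F'$ is a vertex map sending edges to edges. A subgraph $C$ of $H$ is a core of $H$ if there is a homomorphism $H\to C$ but none from $H$ to a proper subgraph of $C$. A copy of $C$ in $F$ is a (not necessarily induced) subgraph of $F$ isomorphic to $C$. For a graph $F$ and a $c$-vertex graph $C$, a $C$-coloring of $F$ is a map $f:V(F)\to\{1,\dots,c\}$ such that the vertices of every copy of $C$ in $F$ receive pairwise distinct colors; $F$ is $C$-colorable if it has one. If $C$ is the core of $H$, a $C$-covering of $H$ of size $r$ is a collection $C_1,\dots,C_r\subseteq V(H)$ such that every copy of $C$ in $H$ lies in the subgraph induced by some $C_i$, and each induced subgraph $H[C_i]$ is $C$-colorable. The $C$-covering number of $H$ is the minimum size of a $C$-covering of $H$. *)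

theory Defs
  imports Main
begin

record 'a ugraph =
  verts :: "'a set"
  edges :: "'a set set"

definition wf_graph :: "'a ugraph \<Rightarrow> bool" where
  "wf_graph G \<longleftrightarrow> finite (verts G) \<and>
     (\<forall>e\<in>edges G. \<exists>u v. e = {u, v} \<and> u \<noteq> v \<and> u \<in> verts G \<and> v \<in> verts G)"

definition graph_hom :: "'a ugraph \<Rightarrow> 'b ugraph \<Rightarrow> ('a \<Rightarrow> 'b) \<Rightarrow> bool" where
  "graph_hom F F' f \<longleftrightarrow> f ` verts F \<subseteq> verts F' \<and>
     (\<forall>u v. {u, v} \<in> edges F \<longrightarrow> {f u, f v} \<in> edges F')"

definition homomorphic :: "'a ugraph \<Rightarrow> 'b ugraph \<Rightarrow> bool" where
  "homomorphic F F' \<longleftrightarrow> (\<exists>f. graph_hom F F' f)"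

definition graph_iso :: "'a ugraph \<Rightarrow> 'b ugraph \<Rightarrow> bool" where
  "graph_iso F F' \<longleftrightarrow> (\<exists>f. bij_betw f (verts F) (verts F') \<and>
     (\<forall>u\<in>verts F. \<forall>v\<in>verts F. {u, v} \<in> edges F \<longleftrightarrow> {f u, f v} \<in> edges F'))"

definition subgraph :: "'a ugraph \<Rightarrow> 'a ugraph \<Rightarrow> bool" where
  "subgraph C H \<longleftrightarrow> wf_graph C \<and> verts C \<subseteq> verts H \<and> edges C \<subseteq> edges H"

definition is_core :: "'a ugraph \<Rightarrow> 'a ugraph \<Rightarrow> bool" where
  "is_core C H \<longleftrightarrow> subgraph C H \<and> homomorphic H C \<and>
     \<not> (\<exists>C'. subgraph C' C \<and> C' \<noteq> C \<and> homomorphic H C')"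

definition is_copy :: "'b ugraph \<Rightarrow> 'a ugraph \<Rightarrow> 'a ugraph \<Rightarrow> bool" where
  "is_copy C F K \<longleftrightarrow> subgraph K F \<and> graph_iso K C"

definition C_coloring :: "'b ugraph \<Rightarrow> 'a ugraph \<Rightarrow> ('a \<Rightarrow> nat) \<Rightarrow> bool" where
  "C_coloring C F f \<longleftrightarrow> f ` verts F \<subseteq> {1..card (verts C)} \<and>
     (\<forall>K. is_copy C F K \<longrightarrow> inj_on f (verts K))"

definition C_colorable :: "'b ugraph \<Rightarrow> 'a ugraph \<Rightarrow> bool" where
  "C_colorable C F \<longleftrightarrow> (\<exists>f. C_coloring C F f)"

definition induced :: "'a ugraph \<Rightarrow> 'a set \<Rightarrow> 'a ugraph" where
  "induced H S = \<lparr>verts = S, edges = {e \<in> edges H. e \<subseteq> S}\<rparr>"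

definition C_covering :: "'b ugraph \<Rightarrow> 'a ugraph \<Rightarrow> (nat \<Rightarrow> 'a set) \<Rightarrow> nat \<Rightarrow> bool" where
  "C_covering C H X r \<longleftrightarrow>
     (\<forall>i<r. X i \<subseteq> verts H \<and> C_colorable C (induced H (X i))) \<and>
     (\<forall>K. is_copy C H K \<longrightarrow> (\<exists>i<r. subgraph K (induced H (X i))))"

definition covering_number :: "'b ugraph \<Rightarrow> 'a ugraph \<Rightarrow> nat" where
  "covering_number C H = (LEAST r. \<exists>X. C_covering C H X r)"

end

theory Submission
  imports Defs
begin

text \<open>A core C admits only injective endomorphisms: the image of C under an endomorphism g
  is a subgraph of C to which H still maps (through g), so minimality forces it to be all of C.
  Hence the cores of homomorphically equivalent graphs are isomorphic. Moreover, if H maps to H'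
  by f and H' maps to C by h, then for a copy K of C in H the composite of an isomorphism
  C \<rightarrow> K with f and h is an endomorphism of C; so f is injective on K and sends K to a copy of C
  in H'. Consequently preimages under f of a C-covering of H' form a C-covering of H (pulling the
  colorings back along f), and the C-covering number can only decrease along homomorphisms into
  graphs that map to C. Around the cycle all H_j are homomorphically equivalent, so all these
  numbers coincide.\<close>

lemma graph_hom_comp:
  "graph_hom A B f \<Longrightarrow> graph_hom B C g \<Longrightarrow> graph_hom A C (g \<circ> f)"
  unfolding graph_hom_def by (auto simp: image_subset_iff)

lemma graph_hom_id: "graph_hom G G id"
  unfolding graph_hom_def by simp

lemma graph_hom_id_subgraph: "subgraph G H \<Longrightarrow> graph_hom G H id"
  unfolding graph_hom_def subgraph_def by auto

lemma homomorphic_subgraph: "subgraph G H \<Longrightarrow> homomorphic G H"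
  unfolding homomorphic_def using graph_hom_id_subgraph by blast

lemma homomorphic_trans: "homomorphic A B \<Longrightarrow> homomorphic B C \<Longrightarrow> homomorphic A C"
  unfolding homomorphic_def using graph_hom_comp by blast

lemma wf_graph_edgeE:
  assumes "wf_graph G" "e \<in> edges G"
  obtains u v where "e = {u, v}" "u \<noteq> v" "u \<in> verts G" "v \<in> verts G"
  using assms unfolding wf_graph_def by blast

lemma wf_graph_edge_distinct: "wf_graph G \<Longrightarrow> {u, v} \<in> edges G \<Longrightarrow> u \<noteq> v"
  by (elim wf_graph_edgeE) (auto simp: doubleton_eq_iff)

lemma wf_graph_edge_subset: "wf_graph G \<Longrightarrow> e \<in> edges G \<Longrightarrow> e \<subseteq> verts G"
  by (elim wf_graph_edgeE) auto

lemma graph_hom_edge_image: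
  assumes "wf_graph G" "graph_hom G G' f" "e \<in> edges G"
  shows "f ` e \<in> edges G'"
  using assms by (elim wf_graph_edgeE) (auto simp: graph_hom_def)

definition hom_image :: "('a \<Rightarrow> 'b) \<Rightarrow> 'a ugraph \<Rightarrow> 'b ugraph" where
  "hom_image f G = \<lparr>verts = f ` verts G, edges = (`) f ` edges G\<rparr>"

lemma graph_hom_hom_image: "graph_hom G (hom_image f G) f"
  unfolding graph_hom_def hom_image_def by (auto intro: image_eqI[where x = "{_, _}"])

lemma subgraph_hom_image:
  assumes G: "wf_graph G" and f: "graph_hom G G' f"
    and no_collapse: "\<forall>u v. {u, v} \<in> edges G \<longrightarrow> f u \<noteq> f v"
  shows "subgraph (hom_image f G) G'"
  unfolding subgraph_def
proof (intro conjI)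
  show "wf_graph (hom_image f G)"
    unfolding wf_graph_def
  proof (intro conjI ballI)
    show "finite (verts (hom_image f G))"
      using G by (simp add: wf_graph_def hom_image_def)
  next
    fix e' assume "e' \<in> edges (hom_image f G)"
    then obtain e where e: "e \<in> edges G" "e' = f ` e" by (auto simp: hom_image_def)
    with G obtain u v where "e = {u, v}" "u \<in> verts G" "v \<in> verts G"
      by (elim wf_graph_edgeE)
    with e no_collapse
    show "\<exists>x y. e' = {x, y} \<and> x \<noteq> y \<and> x \<in> verts (hom_image f G) \<and> y \<in> verts (hom_image f G)"
      by (auto simp: hom_image_def)
  qed
  show "verts (hom_image f G) \<subseteq> verts G'"
    using f by (simp add: graph_hom_def hom_image_def)
  show "edges (hom_image f G) \<subseteq> edges G'"
    using graph_hom_edge_image[OF G f] by (auto simp: hom_image_def)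
qed

lemma graph_iso_hom_image:
  assumes G: "wf_graph G" and inj: "inj_on f (verts G)"
  shows "graph_iso G (hom_image f G)"
  unfolding graph_iso_def
proof (intro exI conjI ballI)
  show "bij_betw f (verts G) (verts (hom_image f G))"
    using inj by (simp add: bij_betw_def hom_image_def)
  fix u v assume uv: "u \<in> verts G" "v \<in> verts G"
  have "f ` {u, v} = f ` e \<longleftrightarrow> {u, v} = e" if "e \<in> edges G" for e
    using inj uv wf_graph_edge_subset[OF G that] by (intro inj_on_image_eq_iff) auto
  then show "{u, v} \<in> edges G \<longleftrightarrow> {f u, f v} \<in> edges (hom_image f G)"
    by (auto simp: hom_image_def)
qed

lemma graph_iso_sym:
  assumes "graph_iso G G'"
  shows "graph_iso G' G"
proof -
  obtain f where bij: "bij_betw f (verts G) (verts G')"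
    and E: "\<forall>u\<in>verts G. \<forall>v\<in>verts G. {u, v} \<in> edges G \<longleftrightarrow> {f u, f v} \<in> edges G'"
    using assms unfolding graph_iso_def by blast
  define g where "g = inv_into (verts G) f"
  have g: "g x \<in> verts G" "f (g x) = x" if "x \<in> verts G'" for x
    using bij that unfolding g_def
    by (auto intro: bij_betw_inv_into_right bij_betw_apply bij_betw_inv_into)
  have "bij_betw g (verts G') (verts G)"
    unfolding g_def using bij by (rule bij_betw_inv_into)
  moreover have "{x, y} \<in> edges G' \<longleftrightarrow> {g x, g y} \<in> edges G"
    if "x \<in> verts G'" "y \<in> verts G'" for x y
    using E g that by simp
  ultimately show ?thesis
    unfolding graph_iso_def by blast
qed

lemma graph_iso_trans:
  assumes "graph_iso A B" "graph_iso B C"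
  shows "graph_iso A C"
proof -
  obtain f where f: "bij_betw f (verts A) (verts B)"
    and fE: "\<forall>u\<in>verts A. \<forall>v\<in>verts A. {u, v} \<in> edges A \<longleftrightarrow> {f u, f v} \<in> edges B"
    using assms(1) unfolding graph_iso_def by blast
  obtain g where g: "bij_betw g (verts B) (verts C)"
    and gE: "\<forall>u\<in>verts B. \<forall>v\<in>verts B. {u, v} \<in> edges B \<longleftrightarrow> {g u, g v} \<in> edges C"
    using assms(2) unfolding graph_iso_def by blast
  have "bij_betw (g \<circ> f) (verts A) (verts C)"
    using f g by (rule bij_betw_trans)
  moreover have "{u, v} \<in> edges A \<longleftrightarrow> {g (f u), g (f v)} \<in> edges C"
    if "u \<in> verts A" "v \<in> verts A" for u v
    using fE gE bij_betw_apply[OF f] that by simp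
  ultimately show ?thesis
    unfolding graph_iso_def by auto
qed

lemma graph_isoE_hom:
  assumes "wf_graph G" "graph_iso G G'"
  obtains f where "graph_hom G G' f" "bij_betw f (verts G) (verts G')"
proof -
  obtain f where f: "bij_betw f (verts G) (verts G')"
    and E: "\<forall>u\<in>verts G. \<forall>v\<in>verts G. {u, v} \<in> edges G \<longleftrightarrow> {f u, f v} \<in> edges G'"
    using assms(2) unfolding graph_iso_def by blast
  have "graph_hom G G' f"
    unfolding graph_hom_def
  proof (intro conjI allI impI)
    show "f ` verts G \<subseteq> verts G'" using f by (simp add: bij_betw_def)
    fix u v assume "{u, v} \<in> edges G"
    moreover from this have "u \<in> verts G" "v \<in> verts G"
      using wf_graph_edge_subset[OF assms(1)] by auto
    ultimately show "{f u, f v} \<in> edges G'" using E by blast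
  qed
  with f that show ?thesis by blast
qed

lemma inj_endomorphism_reflects_edges:
  assumes G: "wf_graph G" and g: "graph_hom G G g" and inj: "inj_on g (verts G)"
    and uv: "u \<in> verts G" "v \<in> verts G" "{g u, g v} \<in> edges G"
  shows "{u, v} \<in> edges G"
proof -
  have E_Pow: "edges G \<subseteq> Pow (verts G)"
    using wf_graph_edge_subset[OF G] by blast
  have "finite (edges G)"
    using G E_Pow finite_Pow_iff finite_subset unfolding wf_graph_def by metis
  moreover have "(`) g ` edges G \<subseteq> edges G"
    using graph_hom_edge_image[OF G g] by blast
  moreover have "inj_on ((`) g) (edges G)"
    using inj_on_image_Pow[OF inj] E_Pow by (rule inj_on_subset)
  ultimately have "(`) g ` edges G = edges G"
    by (rule endo_inj_surj)
  with uv obtain e where e: "e \<in> edges G" "g ` {u, v} = g ` e"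
    by (metis image_empty image_iff image_insert)
  then have "{u, v} = e"
    using inj uv wf_graph_edge_subset[OF G e(1)] by (subst (asm) inj_on_image_eq_iff) auto
  with e show ?thesis by simp
qed

lemma core_endomorphism_inj:
  assumes core: "is_core C H" and g: "graph_hom C C g"
  shows "inj_on g (verts C)"
proof -
  obtain h where h: "graph_hom H C h" and sub: "subgraph C H"
    and minimal: "\<not> (\<exists>C'. subgraph C' C \<and> C' \<noteq> C \<and> homomorphic H C')"
    using core unfolding is_core_def homomorphic_def by blast
  have C: "wf_graph C"
    using sub by (simp add: subgraph_def)
  have "subgraph (hom_image g C) C"
    using C g
  proof (rule subgraph_hom_image)
    show "\<forall>u v. {u, v} \<in> edges C \<longrightarrow> g u \<noteq> g v"
      using g wf_graph_edge_distinct[OF C] unfolding graph_hom_def by blast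
  qed
  moreover have "homomorphic H (hom_image g C)"
    using graph_hom_comp[OF h graph_hom_hom_image] unfolding homomorphic_def by blast
  ultimately have "hom_image g C = C"
    using minimal by blast
  then have "g ` verts C = verts C"
    by (metis hom_image_def ugraph.select_convs(1))
  with C show ?thesis
    by (simp add: wf_graph_def eq_card_imp_inj_on)
qed

lemma graph_iso_cores:
  assumes core: "is_core C H" and core': "is_core C' H'"
    and "homomorphic H H'" "homomorphic H' H"
  shows "graph_iso C C'"
proof -
  have "homomorphic C C'" "homomorphic C' C"
    using assms homomorphic_subgraph homomorphic_trans unfolding is_core_def by metis+
  then obtain A B where A: "graph_hom C C' A" and B: "graph_hom C' C B"
    unfolding homomorphic_def by blast
  have C: "wf_graph C"
    using core by (simp add: is_core_def subgraph_def)
  have BA: "inj_on (B \<circ> A) (verts C)"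
    using core_endomorphism_inj[OF core graph_hom_comp[OF A B]] .
  have AB: "(A \<circ> B) ` verts C' = verts C'"
    using core' graph_hom_comp[OF B A] core_endomorphism_inj endo_inj_surj
    unfolding is_core_def subgraph_def wf_graph_def graph_hom_def by metis
  show ?thesis
    unfolding graph_iso_def
  proof (intro exI conjI ballI iffI)
    show "bij_betw A (verts C) (verts C')"
      unfolding bij_betw_def
    proof
      show "inj_on A (verts C)"
        using BA by (rule inj_on_imageI2)
      have "verts C' = A ` B ` verts C'"
        using AB by (simp add: image_comp)
      also have "\<dots> \<subseteq> A ` verts C"
        using B by (auto simp: graph_hom_def)
      finally have "verts C' \<subseteq> A ` verts C" .
      then show "A ` verts C = verts C'"
        using A by (auto simp: graph_hom_def)
    qed
  next
    fix u v assume "{u, v} \<in> edges C"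
    then show "{A u, A v} \<in> edges C'"
      using A by (simp add: graph_hom_def)
  next
    fix u v assume uv: "u \<in> verts C" "v \<in> verts C" and "{A u, A v} \<in> edges C'"
    then have "{(B \<circ> A) u, (B \<circ> A) v} \<in> edges C"
      using B by (simp add: graph_hom_def)
    then show "{u, v} \<in> edges C"
      using inj_endomorphism_reflects_edges[OF C graph_hom_comp[OF A B] BA uv] by simp
  qed
qed

lemma copy_inj_on:
  assumes core: "is_core C H" and f: "graph_hom F F' f" and h: "graph_hom F' C h"
    and K: "is_copy C F K"
  shows "inj_on f (verts K)"
proof -
  have C: "wf_graph C"
    using core by (simp add: is_core_def subgraph_def)
  obtain \<psi> where \<psi>: "graph_hom C K \<psi>" and bij: "bij_betw \<psi> (verts C) (verts K)"
    using K C graph_iso_sym by (metis is_copy_def graph_isoE_hom)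
  have "graph_hom C C (h \<circ> (f \<circ> (id \<circ> \<psi>)))"
    using K graph_hom_comp[OF graph_hom_comp[OF \<psi> graph_hom_id_subgraph] graph_hom_comp[OF f h]]
    by (simp add: is_copy_def comp_assoc)
  then have "inj_on ((h \<circ> f) \<circ> \<psi>) (verts C)"
    using core_endomorphism_inj[OF core] by (simp add: comp_assoc)
  then have "inj_on (h \<circ> f) (verts K)"
    using bij comp_inj_on_iff by (metis bij_betw_def)
  then show ?thesis
    by (rule inj_on_imageI2)
qed

lemma is_copy_hom_image:
  assumes K: "is_copy C F K" and f: "graph_hom F F' f" and inj: "inj_on f (verts K)"
  shows "is_copy C F' (hom_image f K)"
proof -
  have subK: "subgraph K F" and iso: "graph_iso K C"
    using K by (auto simp: is_copy_def)
  then have wfK: "wf_graph K"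
    by (simp add: subgraph_def)
  have "subgraph (hom_image f K) F'"
  proof (rule subgraph_hom_image[OF wfK])
    show "graph_hom K F' f"
      using graph_hom_comp[OF graph_hom_id_subgraph[OF subK] f] by simp
    show "\<forall>u v. {u, v} \<in> edges K \<longrightarrow> f u \<noteq> f v"
      using inj wf_graph_edge_distinct[OF wfK] wf_graph_edge_subset[OF wfK]
      by (metis inj_on_contraD insert_subset)
  qed
  moreover have "graph_iso (hom_image f K) C"
    using graph_iso_sym[OF graph_iso_hom_image[OF wfK inj]] iso by (rule graph_iso_trans)
  ultimately show ?thesis
    by (simp add: is_copy_def)
qed

lemma C_colorable_pullback:
  assumes core: "is_core C H" and f: "graph_hom F F' f" and h: "graph_hom F' C h"
    and "C_colorable C F'"
  shows "C_colorable C F"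
proof -
  obtain c where c: "C_coloring C F' c"
    using assms(4) unfolding C_colorable_def by blast
  have "C_coloring C F (c \<circ> f)"
    unfolding C_coloring_def
  proof (intro conjI allI impI)
    show "(c \<circ> f) ` verts F \<subseteq> {1..card (verts C)}"
      using c f unfolding C_coloring_def graph_hom_def by (metis image_comp image_mono order_trans)
  next
    fix K assume K: "is_copy C F K"
    have inj: "inj_on f (verts K)"
      using core f h K by (rule copy_inj_on)
    have "inj_on c (f ` verts K)"
      using c is_copy_hom_image[OF K f inj] unfolding C_coloring_def hom_image_def by fastforce
    then show "inj_on (c \<circ> f) (verts K)"
      using inj by (simp add: comp_inj_on)
  qed
  then show ?thesis
    unfolding C_colorable_def by blast
qed

lemma graph_hom_induced:
  "graph_hom H H' f \<Longrightarrow> f ` Y \<subseteq> X \<Longrightarrow> graph_hom (induced H Y) (induced H' X) f"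
  unfolding graph_hom_def induced_def by auto

lemma graph_hom_induced_id: "X \<subseteq> verts H \<Longrightarrow> graph_hom (induced H X) H id"
  unfolding graph_hom_def induced_def by auto

lemma subgraph_induced:
  assumes "subgraph K H" "verts K \<subseteq> X"
  shows "subgraph K (induced H X)"
  using assms wf_graph_edge_subset unfolding subgraph_def induced_def by fastforce

lemma C_covering_pullback:
  assumes core: "is_core C H0" and f: "graph_hom H H' f" and h: "graph_hom H' C h"
    and cov: "C_covering C H' X r"
  shows "C_covering C H (\<lambda>i. f -` X i \<inter> verts H) r"
  unfolding C_covering_def
proof (intro conjI allI impI)
  fix i assume "i < r"
  with cov have X: "X i \<subseteq> verts H'" and col: "C_colorable C (induced H' (X i))"
    unfolding C_covering_def by auto
  have "graph_hom (induced H (f -` X i \<inter> verts H)) (induced H' (X i)) f"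
    using f by (rule graph_hom_induced) auto
  moreover have "graph_hom (induced H' (X i)) C h"
    using graph_hom_comp[OF graph_hom_induced_id[OF X] h] by simp
  ultimately show "C_colorable C (induced H (f -` X i \<inter> verts H))"
    by (rule C_colorable_pullback[OF core _ _ col])
  show "f -` X i \<inter> verts H \<subseteq> verts H"
    by blast
next
  fix K assume K: "is_copy C H K"
  then have "is_copy C H' (hom_image f K)"
    using is_copy_hom_image f copy_inj_on[OF core f h] by blast
  then obtain i where "i < r" and "subgraph (hom_image f K) (induced H' (X i))"
    using cov unfolding C_covering_def by blast
  then have "f ` verts K \<subseteq> X i"
    by (simp add: subgraph_def hom_image_def induced_def)
  moreover have "subgraph K H"
    using K by (simp add: is_copy_def)
  ultimately have "subgraph K (induced H (f -` X i \<inter> verts H))"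
    by (intro subgraph_induced) (auto simp: subgraph_def)
  with \<open>i < r\<close> show "\<exists>i<r. subgraph K (induced H (f -` X i \<inter> verts H))"
    by blast
qed

lemma covering_number_eq:
  assumes core: "is_core C H0" and "homomorphic H H'" "homomorphic H' H" "homomorphic H' C"
  shows "covering_number C H = covering_number C H'"
proof -
  obtain f f' h where f: "graph_hom H H' f" and f': "graph_hom H' H f'" and h: "graph_hom H' C h"
    using assms unfolding homomorphic_def by blast
  have "(\<lambda>r. \<exists>X. C_covering C H X r) = (\<lambda>r. \<exists>X. C_covering C H' X r)"
  proof (intro ext iffI)
    fix r assume "\<exists>X. C_covering C H' X r"
    then show "\<exists>X. C_covering C H X r"
      using C_covering_pullback[OF core f h] by blast
  next
    fix r assume "\<exists>X. C_covering C H X r"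
    then show "\<exists>X. C_covering C H' X r"
      using C_covering_pullback[OF core f' graph_hom_comp[OF f h]] by blast
  qed
  then show ?thesis
    unfolding covering_number_def by simp
qed

lemma homomorphic_cycle:
  assumes cycle: "\<forall>j<s. homomorphic (H j) (H (Suc j mod s))" and "i < s" "j < s"
  shows "homomorphic (H i) (H j)"
proof -
  have "homomorphic (H i) (H ((i + k) mod s))" for k
  proof (induction k)
    case 0
    then show ?case
      using \<open>i < s\<close> graph_hom_id unfolding homomorphic_def by auto
  next
    case (Suc k)
    have "homomorphic (H ((i + k) mod s)) (H (Suc ((i + k) mod s) mod s))"
      using cycle \<open>i < s\<close> by simp
    then have "homomorphic (H ((i + k) mod s)) (H ((i + Suc k) mod s))"
      by (simp add: mod_Suc_eq)
    with Suc show ?case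
      by (rule homomorphic_trans)
  qed
  from this[of "j + s - i"] show ?thesis
    using \<open>i < s\<close> \<open>j < s\<close> by simp
qed

theorem lemma14:
  fixes H Cs :: "nat \<Rightarrow> 'a ugraph" and s :: nat
  assumes "\<forall>j<s. wf_graph (H j)"
    and "\<forall>j<s. is_core (Cs j) (H j)"
    and "\<forall>j<s. homomorphic (H j) (H (Suc j mod s))"
  shows "\<exists>C :: 'a ugraph. (\<forall>j<s. graph_iso (Cs j) C) \<and>
           (\<forall>i<s. \<forall>j<s. covering_number C (H i) = covering_number C (H j))"
proof (cases "s = 0")
  case True
  then show ?thesis by simp
next
  case False
  have hom: "homomorphic (H i) (H j)" if "i < s" "j < s" for i j
    using homomorphic_cycle[OF assms(3) that] .
  have core: "is_core (Cs 0) (H 0)"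
    using assms(2) False by simp
  have to_core: "homomorphic (H j) (Cs 0)" if "j < s" for j
    using hom[of j 0] that False core homomorphic_trans unfolding is_core_def by blast
  show ?thesis
  proof (intro exI conjI allI impI)
    fix j assume "j < s"
    with assms(2) have "is_core (Cs j) (H j)"
      by simp
    then show "graph_iso (Cs j) (Cs 0)"
      using \<open>j < s\<close> False hom by (intro graph_iso_cores[OF _ core]) auto
  next
    fix i j assume "i < s" "j < s"
    then show "covering_number (Cs 0) (H i) = covering_number (Cs 0) (H j)"
      using hom to_core by (intro covering_number_eq[OF core]) simp_all
  qed
qed

end
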